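(* Let $R$ be a conformal superalgebra and let $0\to M\xrightarrow{d_1}N\xrightarrow{d_2}P\to0$ be an exact sequence of $R$-modules such that for every morphism $T:X\to Y$ in this sequence (including $0\to M$ and $P\to 0$), $Y/T(X)$ is a finitely generated torsion-free $\mathbb C[\partial]$-module. Then the dual sequence $0\to P^*\xrightarrow{d_2^*}N^*\xrightarrow{d_1^*}M^*\to0$ is exact.
   Context: A conformal superalgebra $R$ is a $\mathbb Z_2$-graded $\mathbb C[\partial]$-module with a $\mathbb C$-linear $\lambda$-bracket $R\otimes R\to\mathbb C[\lambda]\otimes R$ satisfying $[\partial a_\lambda b]=-\lambda[a_\lambda b]$, $[a_\lambda\partial b]=(\lambda+\partial)[a_\lambda b]$, $[a_\lambda b]=-(-1)^{p(a)p(b)}[b_{-\lambda-\partial}a]$ and $[a_\lambda[b_\mu c]]=[[a_\lambda b]_{\lambda+\mu}c]+(-1)^{p(a)p(b)}[b_\mu[a_\lambda c]]$. An $R$-module $M$ is a $\mathbb Z_2$-graded $\mathbb C[\partial]$-module with a $\lambda$-action $a_\lambda v=\sum_{n\ge0}\frac{\lambda^n}{n!}a_{(n)}v$ satisfying the usual axioms; a morphism $T:M\to N$ of $R$-modules is a linear map with $T(\partial m)=\partial T(m)$ and $T(a_\lambda m)=a_\lambda T(m)$. The conformal dual is $M^*=\{f_\lambda:M\to\mathbb C[\lambda]\mid f_\lambda(\partial m)=\lambda f_\lambda(m)\}$ with $(\partial f)_\lambda(m)=-\lambda f_\lambda(m)$ and $(a_\lambda f)_\mu(m)=-(-1)^{p(a)p(f)}f_{\mu-\lambda}(a_\lambda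 m)$. The dual morphism $T^*:N^*\to M^*$ is $[T^*(f)]_\lambda(m)=-f_\lambda(T(m))$. *)

theory Defs
  imports Main "HOL-Computational_Algebra.Polynomial"
begin

definition lin_map :: "(complex \<Rightarrow> 'a::ab_group_add \<Rightarrow> 'a) \<Rightarrow> (complex \<Rightarrow> 'b::ab_group_add \<Rightarrow> 'b)
    \<Rightarrow> ('a \<Rightarrow> 'b) \<Rightarrow> bool" where
  "lin_map s1 s2 f \<longleftrightarrow> (\<forall>x y. f (x + y) = f x + f y) \<and> (\<forall>c x. f (s1 c x) = s2 c (f x))"

definition lin_subspace :: "(complex \<Rightarrow> 'a::ab_group_add \<Rightarrow> 'a) \<Rightarrow> 'a set \<Rightarrow> bool" where
  "lin_subspace s S \<longleftrightarrow> 0 \<in> S \<and> (\<forall>x\<in>S. \<forall>y\<in>S. x + y \<in> S) \<and> (\<forall>c. \<forall>x\<in>S. s c x \<in> S)"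

definition cpd_module :: "(complex \<Rightarrow> 'a::ab_group_add \<Rightarrow> 'a) \<Rightarrow> ('a \<Rightarrow> 'a) \<Rightarrow> bool" where
  "cpd_module s D \<longleftrightarrow> vector_space s \<and> lin_map s s D"

definition poly_act :: "(complex \<Rightarrow> 'a::ab_group_add \<Rightarrow> 'a) \<Rightarrow> ('a \<Rightarrow> 'a) \<Rightarrow> complex poly \<Rightarrow> 'a \<Rightarrow> 'a" where
  "poly_act s D p x = (\<Sum>i\<le>degree p. s (coeff p i) ((D ^^ i) x))"

definition quot_fin_gen :: "(complex \<Rightarrow> 'a::ab_group_add \<Rightarrow> 'a) \<Rightarrow> ('a \<Rightarrow> 'a) \<Rightarrow> 'a set \<Rightarrow> bool" where
  "quot_fin_gen s D S \<longleftrightarrow>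
     (\<exists>G. finite G \<and> (\<forall>y. \<exists>p :: 'a \<Rightarrow> complex poly. y - (\<Sum>g\<in>G. poly_act s D (p g) g) \<in> S))"

definition quot_torsion_free :: "(complex \<Rightarrow> 'a::ab_group_add \<Rightarrow> 'a) \<Rightarrow> ('a \<Rightarrow> 'a) \<Rightarrow> 'a set \<Rightarrow> bool" where
  "quot_torsion_free s D S \<longleftrightarrow> (\<forall>p y. p \<noteq> 0 \<longrightarrow> poly_act s D p y \<in> S \<longrightarrow> y \<in> S)"

text \<open>G False = even part, G True = odd part; the space is the direct sum, and D preserves
the parts.\<close>
definition z2_graded :: "(complex \<Rightarrow> 'a::ab_group_add \<Rightarrow> 'a) \<Rightarrow> ('a \<Rightarrow> 'a) \<Rightarrow> (bool \<Rightarrow> 'a set) \<Rightarrow> bool" where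
  "z2_graded s D G \<longleftrightarrow> lin_subspace s (G False) \<and> lin_subspace s (G True)
     \<and> G False \<inter> G True = {0} \<and> (\<forall>x. \<exists>a\<in>G False. \<exists>b\<in>G True. x = a + b)
     \<and> (\<forall>i. D ` G i \<subseteq> G i)"

text \<open>(-1)^(p(a) p(b)) for parities given as booleans (True = odd).\<close>
definition psign :: "bool \<Rightarrow> bool \<Rightarrow> complex" where
  "psign i j = (if i \<and> j then -1 else 1)"

text \<open>The lambda-bracket [a_lambda b] = sum_n lambda^n/n! a_(n) b is encoded by the n-products
pr n a b; the axioms are the coefficientwise forms of the lambda-bracket axioms.\<close>
definition conformal_superalgebra ::
  "(complex \<Rightarrow> 'r::ab_group_add \<Rightarrow> 'r) \<Rightarrow> ('r \<Rightarrow> 'r) \<Rightarrow> (bool \<Rightarrow> 'r set) \<Rightarrow> (nat \<Rightarrow> 'r \<Rightarrow> 'r \<Rightarrow> 'r) \<Rightarrow> bool" where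
  "conformal_superalgebra s D G pr \<longleftrightarrow>
     cpd_module s D \<and> z2_graded s D G
     \<and> (\<forall>n b. lin_map s s (\<lambda>a. pr n a b)) \<and> (\<forall>n a. lin_map s s (pr n a))
     \<and> (\<forall>a b. \<exists>N. \<forall>n\<ge>N. pr n a b = 0)
     \<and> (\<forall>i j n a b. a \<in> G i \<longrightarrow> b \<in> G j \<longrightarrow> pr n a b \<in> G (i \<noteq> j))
     \<comment> \<open>[partial a_lambda b] = -lambda [a_lambda b]\<close>
     \<and> (\<forall>n a b. pr n (D a) b = - s (of_nat n) (pr (n - 1) a b))
     \<comment> \<open>[a_lambda partial b] = (lambda + partial) [a_lambda b]\<close>
     \<and> (\<forall>n a b. pr n a (D b) = D (pr n a b) + s (of_nat n) (pr (n - 1) a b))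
     \<comment> \<open>skew-symmetry [a_lambda b] = -(-1)^(p(a)p(b)) [b_(-lambda-partial) a]\<close>
     \<and> (\<forall>i j n a b K. a \<in> G i \<longrightarrow> b \<in> G j \<longrightarrow> (\<forall>m\<ge>n + K. pr m b a = 0) \<longrightarrow>
          pr n a b = - s (psign i j)
             (\<Sum>k<K. s ((-1) ^ (n + k) / of_nat (fact k)) ((D ^^ k) (pr (n + k) b a))))
     \<comment> \<open>Jacobi identity\<close>
     \<and> (\<forall>i j m n a b c. a \<in> G i \<longrightarrow> b \<in> G j \<longrightarrow>
          pr m a (pr n b c) = (\<Sum>k\<le>m. s (of_nat (m choose k)) (pr (m + n - k) (pr k a b) c))
                              + s (psign i j) (pr n b (pr m a c)))"

text \<open>The lambda-action a_lambda v = sum_n lambda^n/n! a_(n) v is encoded by act n a v.\<close>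
definition conformal_module ::
  "(complex \<Rightarrow> 'r::ab_group_add \<Rightarrow> 'r) \<Rightarrow> ('r \<Rightarrow> 'r) \<Rightarrow> (bool \<Rightarrow> 'r set) \<Rightarrow> (nat \<Rightarrow> 'r \<Rightarrow> 'r \<Rightarrow> 'r)
   \<Rightarrow> (complex \<Rightarrow> 'm::ab_group_add \<Rightarrow> 'm) \<Rightarrow> ('m \<Rightarrow> 'm) \<Rightarrow> (bool \<Rightarrow> 'm set) \<Rightarrow> (nat \<Rightarrow> 'r \<Rightarrow> 'm \<Rightarrow> 'm) \<Rightarrow> bool" where
  "conformal_module sR DR GR pr s D G act \<longleftrightarrow>
     cpd_module s D \<and> z2_graded s D G
     \<and> (\<forall>n v. lin_map sR s (\<lambda>a. act n a v)) \<and> (\<forall>n a. lin_map s s (act n a))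
     \<and> (\<forall>a v. \<exists>N. \<forall>n\<ge>N. act n a v = 0)
     \<and> (\<forall>i j n a v. a \<in> GR i \<longrightarrow> v \<in> G j \<longrightarrow> act n a v \<in> G (i \<noteq> j))
     \<comment> \<open>(partial a)_lambda v = -lambda a_lambda v\<close>
     \<and> (\<forall>n a v. act n (DR a) v = - s (of_nat n) (act (n - 1) a v))
     \<comment> \<open>a_lambda (partial v) = (lambda + partial) a_lambda v\<close>
     \<and> (\<forall>n a v. act n a (D v) = D (act n a v) + s (of_nat n) (act (n - 1) a v))
     \<comment> \<open>a_lambda (b_mu v) - (-1)^(p(a)p(b)) b_mu (a_lambda v) = [a_lambda b]_(lambda+mu) v\<close>
     \<and> (\<forall>i j m n a b v. a \<in> GR i \<longrightarrow> b \<in> GR j \<longrightarrow>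
          act m a (act n b v) - s (psign i j) (act n b (act m a v))
            = (\<Sum>k\<le>m. s (of_nat (m choose k)) (act (m + n - k) (pr k a b) v)))"

definition module_morphism ::
  "(complex \<Rightarrow> 'm::ab_group_add \<Rightarrow> 'm) \<Rightarrow> ('m \<Rightarrow> 'm) \<Rightarrow> (nat \<Rightarrow> 'r \<Rightarrow> 'm \<Rightarrow> 'm)
   \<Rightarrow> (complex \<Rightarrow> 'n::ab_group_add \<Rightarrow> 'n) \<Rightarrow> ('n \<Rightarrow> 'n) \<Rightarrow> (nat \<Rightarrow> 'r \<Rightarrow> 'n \<Rightarrow> 'n)
   \<Rightarrow> ('m \<Rightarrow> 'n) \<Rightarrow> bool" where
  "module_morphism sM DM actM sN DN actN T \<longleftrightarrow>
     lin_map sM sN T \<and> (\<forall>m. T (DM m) = DN (T m)) \<and> (\<forall>n a m. T (actM n a m) = actN n a (T m))"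

definition conformal_dual :: "(complex \<Rightarrow> 'm::ab_group_add \<Rightarrow> 'm) \<Rightarrow> ('m \<Rightarrow> 'm) \<Rightarrow> ('m \<Rightarrow> complex poly) set" where
  "conformal_dual s D = {f. lin_map s smult f \<and> (\<forall>m. f (D m) = [:0, 1:] * f m)}"

definition dual_morphism :: "('m \<Rightarrow> 'n) \<Rightarrow> ('n \<Rightarrow> complex poly) \<Rightarrow> ('m \<Rightarrow> complex poly)" where
  "dual_morphism T f = (\<lambda>m. - f (T m))"

end

theory Submission
  imports Defs
begin

text \<open>Dualising is contravariant, so \<open>d\<^sub>2\<^sup>*\<close> is injective because \<open>d\<^sub>2\<close> is onto, and exactness at
  \<open>N\<^sup>*\<close> says that a functional on \<open>N\<close> vanishing on \<open>ker d\<^sub>2 = im d\<^sub>1\<close> factors through \<open>d\<^sub>2\<close>.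
  The substance is the surjectivity of \<open>d\<^sub>1\<^sup>*\<close>.  As \<open>N / d\<^sub>1(M)\<close> is finitely generated and
  torsion-free over the principal ideal domain \<open>\<complex>[\<partial>]\<close>, it is free: Euclid's algorithm applied
  to the relations among a finite set of generators shrinks it to a basis.  A basis yields a
  \<open>\<complex>[\<partial>]\<close>-linear retraction of \<open>N\<close> onto \<open>d\<^sub>1(M)\<close>, hence a \<open>\<complex>[\<partial>]\<close>-linear left inverse
  \<open>\<rho>\<close> of \<open>d\<^sub>1\<close>, and every \<open>f \<in> M\<^sup>*\<close> equals \<open>d\<^sub>1\<^sup>*(\<rho>\<^sup>* f)\<close>.  Only the hypothesis on
  \<open>N / d\<^sub>1(M)\<close> is needed.\<close>

lemma lin_map_additive: "lin_map s1 s2 f \<Longrightarrow> additive f"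
  by (simp add: lin_map_def additive_def)

lemma lin_subspace_range:
  assumes "lin_map s1 s2 f"
  shows "lin_subspace s2 (range f)"
proof -
  have "f 0 = 0" using lin_map_additive[OF assms] by (rule additive.zero)
  moreover have "f x + f y = f (x + y)" "s2 c (f x) = f (s1 c x)" for x y c
    using assms by (simp_all add: lin_map_def)
  ultimately show ?thesis unfolding lin_subspace_def by (auto intro: range_eqI)
qed

locale cpd_mod = vector_space s for s :: "complex \<Rightarrow> 'a::ab_group_add \<Rightarrow> 'a" +
  fixes D :: "'a \<Rightarrow> 'a"
  assumes D_linear: "lin_map s s D"
begin

sublocale D: additive D
  using D_linear by (rule lin_map_additive)

lemma D_scale: "D (s c x) = s c (D x)"
  using D_linear by (simp add: lin_map_def)

abbreviation pa :: "complex poly \<Rightarrow> 'a \<Rightarrow> 'a" where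
  "pa \<equiv> poly_act s D"

lemma poly_act_eq_sum_lessThan:
  assumes "degree p < K"
  shows "pa p x = (\<Sum>i<K. s (coeff p i) ((D ^^ i) x))"
  unfolding poly_act_def
  by (rule sum.mono_neutral_left) (use assms in \<open>auto simp: coeff_eq_0\<close>)

lemma poly_act_pCons: "pa (pCons a p) x = s a x + D (pa p x)"
proof -
  let ?K = "Suc (degree p)"
  have "pa (pCons a p) x = (\<Sum>i<Suc ?K. s (coeff (pCons a p) i) ((D ^^ i) x))"
    by (rule poly_act_eq_sum_lessThan) (simp add: degree_pCons_le le_imp_less_Suc)
  also have "\<dots> = s a x + (\<Sum>i<?K. s (coeff p i) ((D ^^ Suc i) x))"
    by (subst sum.lessThan_Suc_shift) simp
  also have "(\<Sum>i<?K. s (coeff p i) ((D ^^ Suc i) x)) = D (pa p x)"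
    by (simp only: poly_act_eq_sum_lessThan[of p ?K x, OF lessI] D.sum D_scale funpow.simps comp_apply)
  finally show ?thesis .
qed

lemma poly_act_0 [simp]: "pa 0 x = 0"
  by (simp add: poly_act_def)

lemma additive_poly_act: "additive (pa p)"
  by unfold_locales (induct p, simp_all add: poly_act_pCons D.add scale_right_distrib add_ac)

lemma additive_poly_act_left: "additive (\<lambda>p. pa p x)"
proof
  show "pa (p + q) x = pa p x + pa q x" for p q
  proof (induct p arbitrary: q)
    case (pCons a p)
    then show ?case
      by (cases q) (simp add: poly_act_pCons D.add scale_left_distrib add_ac)
  qed simp
qed

lemmas poly_act_add = additive.add[OF additive_poly_act_left]
lemmas poly_act_diff = additive.diff[OF additive_poly_act_left]
lemmas poly_act_add_right = additive.add[OF additive_poly_act]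

lemma poly_act_smult: "pa (smult c p) x = s c (pa p x)"
  by (induct p) (simp_all add: poly_act_pCons D_scale scale_right_distrib)

lemma poly_act_mult: "pa (p * q) x = pa p (pa q x)"
  by (induct p) (simp_all add: poly_act_pCons poly_act_add poly_act_smult)

lemma poly_act_X: "pa [:0, 1:] x = D x"
  by (simp add: poly_act_pCons D.zero)

end

lemma cpd_modI: "cpd_module s D \<Longrightarrow> cpd_mod s D"
  by (simp add: cpd_module_def cpd_mod_def cpd_mod_axioms_def)

definition relation_weight :: "'i set \<Rightarrow> ('i \<Rightarrow> complex poly) \<Rightarrow> nat" where
  "relation_weight I c = (\<Sum>i\<in>I. if c i = 0 then 0 else Suc (degree (c i)))"

lemma relation_weight_mod_less:
  assumes "finite I" "i \<in> I" "c i \<noteq> 0" "c j \<noteq> 0" "degree (c j) \<le> degree (c i)"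
  shows "relation_weight I (c(i := c i mod c j)) < relation_weight I c"
proof -
  let ?w = "\<lambda>p :: complex poly. if p = 0 then 0 else Suc (degree p)"
  have "c i mod c j = 0 \<or> degree (c i mod c j) < degree (c j)"
    using \<open>c j \<noteq> 0\<close> degree_mod_less by blast
  then have "?w (c i mod c j) < ?w (c i)"
    using assms(3,5) by auto
  then show ?thesis
    unfolding relation_weight_def using assms(1,2)
    by (intro sum_strict_mono_ex1) (auto intro: bexI[of _ i])
qed

locale torsion_free_quotient = cpd_mod s D for s :: "complex \<Rightarrow> 'a::ab_group_add \<Rightarrow> 'a" and D +
  fixes S :: "'a set"
  assumes lin_subspace: "lin_subspace s S"
    and D_closed: "x \<in> S \<Longrightarrow> D x \<in> S"
    and torsion_free: "quot_torsion_free s D S"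
begin

lemma subspace: "subspace S"
  using lin_subspace by (simp add: lin_subspace_def subspace_def)

lemma poly_act_closed: "x \<in> S \<Longrightarrow> pa p x \<in> S"
  by (induct p) (simp_all add: poly_act_pCons subspace_0 subspace_add subspace_scale subspace D_closed)

definition generates_mod :: "'i set \<Rightarrow> ('i \<Rightarrow> 'a) \<Rightarrow> bool" where
  "generates_mod I b \<longleftrightarrow> (\<forall>y. \<exists>p. y - (\<Sum>i\<in>I. pa (p i) (b i)) \<in> S)"

definition independent_mod :: "'i set \<Rightarrow> ('i \<Rightarrow> 'a) \<Rightarrow> bool" where
  "independent_mod I b \<longleftrightarrow> (\<forall>p. (\<Sum>i\<in>I. pa (p i) (b i)) \<in> S \<longrightarrow> (\<forall>i\<in>I. p i = 0))"

lemma independent_modD: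
  "independent_mod I b \<Longrightarrow> (\<Sum>i\<in>I. pa (p i) (b i)) \<in> S \<Longrightarrow> i \<in> I \<Longrightarrow> p i = 0"
  unfolding independent_mod_def by blast

lemma sum_poly_act_shear:
  assumes "finite I" "i \<in> I" "j \<in> I" "i \<noteq> j"
  shows "(\<Sum>l\<in>I. pa ((p(i := p i - p j * q)) l) ((b(j := b j + pa q (b i))) l))
       = (\<Sum>l\<in>I. pa (p l) (b l))"
proof -
  have I: "I = insert i (insert j (I - {i, j}))"
    using assms by auto
  have "(\<Sum>l\<in>I - {i, j}. pa ((p(i := p i - p j * q)) l) ((b(j := b j + pa q (b i))) l))
      = (\<Sum>l\<in>I - {i, j}. pa (p l) (b l))"
    by (rule sum.cong) auto
  moreover have "pa (p i - p j * q) (b i) + pa (p j) (b j + pa q (b i)) = pa (p i) (b i) + pa (p j) (b j)"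
    by (simp add: poly_act_diff poly_act_mult poly_act_add_right)
  ultimately show ?thesis
    using assms by (subst (1 2) I) (simp add: add.assoc)
qed

lemma generates_mod_shear:
  assumes "finite I" "i \<in> I" "j \<in> I" "i \<noteq> j" "generates_mod I b"
  shows "generates_mod I (b(j := b j + pa q (b i)))"
  unfolding generates_mod_def
proof
  fix y
  obtain p where "y - (\<Sum>l\<in>I. pa (p l) (b l)) \<in> S"
    using assms(5) unfolding generates_mod_def by blast
  then show "\<exists>p. y - (\<Sum>l\<in>I. pa (p l) ((b(j := b j + pa q (b i))) l)) \<in> S"
    by (intro exI[of _ "p(i := p i - p j * q)"]) (simp only: sum_poly_act_shear[OF assms(1-4)])
qed

lemma generates_mod_remove:
  assumes "finite I" "generates_mod I b" "b j \<in> S"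
  shows "generates_mod (I - {j}) b"
  unfolding generates_mod_def
proof
  fix y
  obtain p where p: "y - (\<Sum>i\<in>I. pa (p i) (b i)) \<in> S"
    using assms(2) unfolding generates_mod_def by blast
  have "y - (\<Sum>i\<in>I - {j}. pa (p i) (b i))
      = (y - (\<Sum>i\<in>I. pa (p i) (b i))) + (if j \<in> I then pa (p j) (b j) else 0)"
    using assms(1) by (simp add: sum_diff1)
  also have "\<dots> \<in> S"
    using p assms(3) by (simp add: subspace_add subspace_0 subspace poly_act_closed)
  finally show "\<exists>p. y - (\<Sum>i\<in>I - {j}. pa (p i) (b i)) \<in> S" by blast
qed

text \<open>Euclid's algorithm on the relation: for a nonzero coefficient \<open>c j\<close> of least degree,
  replacing \<open>c i\<close> by \<open>c i mod c j\<close> and compensating by the shear \<open>b j + (c i div c j) b i\<close>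
  keeps both the relation and the generating property.  When only \<open>c j\<close> is left nonzero,
  torsion-freeness puts \<open>b j\<close> into \<open>S\<close>.\<close>

lemma generates_mod_remove_one:
  assumes "finite I" "generates_mod I b" "(\<Sum>i\<in>I. pa (c i) (b i)) \<in> S" "i0 \<in> I" "c i0 \<noteq> 0"
  shows "\<exists>j\<in>I. \<exists>b'. generates_mod (I - {j}) b'"
  using assms(2-)
proof (induction c arbitrary: b i0 rule: measure_induct_rule[where f = "relation_weight I"])
  case (less c)
  obtain j where j: "j \<in> I" "c j \<noteq> 0"
    and least: "\<And>i. i \<in> I \<Longrightarrow> c i \<noteq> 0 \<Longrightarrow> degree (c j) \<le> degree (c i)"
    using ex_has_least_nat[of "\<lambda>i. i \<in> I \<and> c i \<noteq> 0" i0 "\<lambda>i. degree (c i)"] less.prems(3,4)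
    by blast
  show ?case
  proof (cases "\<exists>i\<in>I - {j}. c i \<noteq> 0")
    case False
    have "(\<Sum>i\<in>I. pa (c i) (b i)) = pa (c j) (b j) + (\<Sum>i\<in>I - {j}. pa (c i) (b i))"
      using \<open>finite I\<close> j(1) by (rule sum.remove)
    also have "(\<Sum>i\<in>I - {j}. pa (c i) (b i)) = 0"
      using False by (intro sum.neutral) auto
    finally have "b j \<in> S"
      using torsion_free j(2) less.prems(2) by (simp add: quot_torsion_free_def)
    then show ?thesis
      using generates_mod_remove[OF \<open>finite I\<close> less.prems(1)] j(1) by blast
  next
    case True
    then obtain i where i: "i \<in> I" "i \<noteq> j" "c i \<noteq> 0"
      by blast
    let ?c = "c(i := c i mod c j)" and ?b = "b(j := b j + pa (c i div c j) (b i))"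
    have "?c = c(i := c i - c j * (c i div c j))"
      by (simp add: minus_mult_div_eq_mod)
    then have relation: "(\<Sum>l\<in>I. pa (?c l) (?b l)) \<in> S"
      using less.prems(2) sum_poly_act_shear[OF \<open>finite I\<close> i(1) j(1) i(2), of c "c i div c j" b]
      by (simp only:)
    have generates: "generates_mod I ?b"
      using generates_mod_shear[OF \<open>finite I\<close> i(1) j(1) i(2) less.prems(1)] .
    have smaller: "relation_weight I ?c < relation_weight I c"
      using relation_weight_mod_less[OF \<open>finite I\<close> i(1) i(3) j(2) least[OF i(1) i(3)]] .
    have "?c j \<noteq> 0"
      using j(2) i(2) by simp
    then show ?thesis
      by (rule less.IH[OF smaller generates relation j(1)])
  qed
qed

lemma ex_basis_mod:
  fixes b :: "'i \<Rightarrow> 'a"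
  assumes "finite I" "generates_mod I b"
  shows "\<exists>J (b' :: 'i \<Rightarrow> 'a). finite J \<and> generates_mod J b' \<and> independent_mod J b'"
  using assms
proof (induction "card I" arbitrary: I b rule: less_induct)
  case less
  show ?case
  proof (cases "independent_mod I b")
    case True
    with less.prems show ?thesis
      by (intro exI[of _ I] exI[of _ b]) simp
  next
    case False
    then obtain c i0 where "(\<Sum>i\<in>I. pa (c i) (b i)) \<in> S" "i0 \<in> I" "c i0 \<noteq> 0"
      unfolding independent_mod_def by blast
    then obtain j b' where j: "j \<in> I" and generates: "generates_mod (I - {j}) b'"
      using generates_mod_remove_one[OF less.prems] by blast
    have "finite (I - {j})"
      using less.prems(1) by simp
    then show ?thesis
      by (rule less.hyps[OF card_Diff1_less[OF less.prems(1) j] _ generates])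
  qed
qed

text \<open>The component in \<open>S\<close> of the decomposition \<open>S \<oplus> \<Oplus>\<^sub>j \<complex>[\<partial>] b\<^sub>j\<close>; independence makes the
  decomposition unique, which is what makes the component \<open>\<complex>[\<partial>]\<close>-linear.\<close>

definition S_component :: "'i set \<Rightarrow> ('i \<Rightarrow> 'a) \<Rightarrow> 'a \<Rightarrow> 'a" where
  "S_component J b y = y - (\<Sum>i\<in>J. pa ((SOME p. y - (\<Sum>i\<in>J. pa (p i) (b i)) \<in> S) i) (b i))"

context
  fixes J :: "'i set" and b :: "'i \<Rightarrow> 'a"
  assumes generates: "generates_mod J b" and independent: "independent_mod J b"
begin

lemma S_component_in: "S_component J b y \<in> S"
proof -
  have "\<exists>p. y - (\<Sum>i\<in>J. pa (p i) (b i)) \<in> S"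
    using generates unfolding generates_mod_def by blast
  then show ?thesis
    unfolding S_component_def by (rule someI_ex)
qed

lemma S_component_eqI:
  assumes "y - (\<Sum>i\<in>J. pa (p i) (b i)) \<in> S"
  shows "S_component J b y = y - (\<Sum>i\<in>J. pa (p i) (b i))"
proof -
  obtain q where q: "S_component J b y = y - (\<Sum>i\<in>J. pa (q i) (b i))"
    unfolding S_component_def by blast
  have "(\<Sum>i\<in>J. pa (q i - p i) (b i)) = (y - (\<Sum>i\<in>J. pa (p i) (b i))) - S_component J b y"
    unfolding q poly_act_diff sum_subtractf by simp
  also have "\<dots> \<in> S"
    using assms S_component_in by (rule subspace_diff[OF subspace])
  finally have "q i - p i = 0" if "i \<in> J" for i
    using that by (rule independent_modD[OF independent])
  then show ?thesis
    unfolding q by (intro arg_cong[where f = "\<lambda>z. y - z"] sum.cong) auto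
qed

lemma S_component_add: "S_component J b (x + y) = S_component J b x + S_component J b y"
proof -
  obtain p q where x: "S_component J b x = x - (\<Sum>i\<in>J. pa (p i) (b i))"
    and y: "S_component J b y = y - (\<Sum>i\<in>J. pa (q i) (b i))"
    unfolding S_component_def by blast
  have sum_eq: "(x + y) - (\<Sum>i\<in>J. pa (p i + q i) (b i)) = S_component J b x + S_component J b y"
    unfolding x y poly_act_add sum.distrib by (simp add: algebra_simps)
  also have "\<dots> \<in> S"
    using subspace S_component_in S_component_in by (rule subspace_add)
  finally show ?thesis
    unfolding sum_eq[symmetric] by (rule S_component_eqI)
qed

lemma S_component_scale: "S_component J b (s c x) = s c (S_component J b x)"
proof -
  obtain p where x: "S_component J b x = x - (\<Sum>i\<in>J. pa (p i) (b i))"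
    unfolding S_component_def by blast
  have sum_eq: "s c x - (\<Sum>i\<in>J. pa (smult c (p i)) (b i)) = s c (S_component J b x)"
    unfolding x poly_act_smult scale_sum_right scale_right_diff_distrib ..
  also have "\<dots> \<in> S"
    using subspace S_component_in by (rule subspace_scale)
  finally show ?thesis
    unfolding sum_eq[symmetric] by (rule S_component_eqI)
qed

lemma S_component_D: "S_component J b (D x) = D (S_component J b x)"
proof -
  obtain p where x: "S_component J b x = x - (\<Sum>i\<in>J. pa (p i) (b i))"
    unfolding S_component_def by blast
  have sum_eq: "D x - (\<Sum>i\<in>J. pa ([:0, 1:] * p i) (b i)) = D (S_component J b x)"
    unfolding x poly_act_mult poly_act_X D.diff D.sum ..
  also have "\<dots> \<in> S"
    using S_component_in by (rule D_closed)
  finally show ?thesis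
    unfolding sum_eq[symmetric] by (rule S_component_eqI)
qed

lemma S_component_id: "x \<in> S \<Longrightarrow> S_component J b x = x"
  using S_component_eqI[of x "\<lambda>i. 0"] by simp

end

lemma ex_retraction:
  assumes "quot_fin_gen s D S"
  shows "\<exists>R. lin_map s s R \<and> (\<forall>x. R (D x) = D (R x)) \<and> range R \<subseteq> S \<and> (\<forall>x\<in>S. R x = x)"
proof -
  obtain G where "finite G" "\<forall>y. \<exists>p. y - (\<Sum>g\<in>G. pa (p g) g) \<in> S"
    using assms unfolding quot_fin_gen_def by blast
  then have "finite G" "generates_mod G id"
    unfolding generates_mod_def by simp_all
  then obtain J and b :: "'a \<Rightarrow> 'a" where basis: "generates_mod J b" "independent_mod J b"
    using ex_basis_mod by blast
  have "lin_map s s (S_component J b)"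
    unfolding lin_map_def using S_component_add[OF basis] S_component_scale[OF basis] by blast
  moreover have "range (S_component J b) \<subseteq> S"
    using S_component_in[OF basis] by blast
  ultimately show ?thesis
    using S_component_D[OF basis] S_component_id[OF basis] by blast
qed

end

lemma ex_left_inverse_morphism:
  assumes "cpd_module sN DN"
    and T: "lin_map sM sN T" "\<forall>m. T (DM m) = DN (T m)" "inj T"
    and "quot_fin_gen sN DN (range T)" "quot_torsion_free sN DN (range T)"
  shows "\<exists>\<rho>. lin_map sN sM \<rho> \<and> (\<forall>x. \<rho> (DN x) = DM (\<rho> x)) \<and> (\<forall>m. \<rho> (T m) = m)"
proof -
  interpret torsion_free_quotient sN DN "range T"
  proof (intro torsion_free_quotient.intro torsion_free_quotient_axioms.intro)
    show "cpd_mod sN DN"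
      using assms(1) by (rule cpd_modI)
    show "lin_subspace sN (range T)"
      using T(1) by (rule lin_subspace_range)
    show "x \<in> range T \<Longrightarrow> DN x \<in> range T" for x
      using T(2) by (auto simp flip: T(2))
  qed (rule assms(6))
  obtain R where R: "lin_map sN sN R" "\<forall>x. R (DN x) = DN (R x)" "range R \<subseteq> range T" "\<forall>x\<in>range T. R x = x"
    using ex_retraction assms(5) by blast
  define \<rho> where "\<rho> x = inv T (R x)" for x
  have T_\<rho>: "T (\<rho> x) = R x" for x
    using f_inv_into_f[of "R x" T UNIV] R(3) unfolding \<rho>_def by blast
  have \<rho>_eqI: "\<rho> x = m" if "R x = T m" for x m
    using T_\<rho> T(3) that by (metis injD)
  have "lin_map sN sM \<rho>"
    using R(1) T(1) unfolding lin_map_def by (auto intro!: \<rho>_eqI simp: T_\<rho>)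
  moreover have "\<rho> (DN x) = DM (\<rho> x)" for x
    using R(2) T(2) by (auto intro!: \<rho>_eqI simp: T_\<rho>)
  moreover have "\<rho> (T m) = m" for m
    using R(4) by (auto intro!: \<rho>_eqI)
  ultimately show ?thesis
    by blast
qed

lemma conformal_dual_additive: "f \<in> conformal_dual s D \<Longrightarrow> additive f"
  unfolding conformal_dual_def by (blast intro: lin_map_additive)

lemma dual_morphism_in_conformal_dual:
  assumes "lin_map s1 s2 T" "\<forall>x. T (D1 x) = D2 (T x)" "f \<in> conformal_dual s2 D2"
  shows "dual_morphism T f \<in> conformal_dual s1 D1"
  using assms by (simp add: conformal_dual_def dual_morphism_def lin_map_def)

lemma dual_morphism_dual_morphism: "dual_morphism T (dual_morphism U f) = f \<circ> U \<circ> T"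
  by (simp add: dual_morphism_def fun_eq_iff)

lemma inj_dual_morphism:
  assumes "surj T"
  shows "inj (dual_morphism T)"
proof (rule injI)
  fix f g
  assume eq: "dual_morphism T f = dual_morphism T g"
  show "f = g"
  proof
    fix p
    obtain n where "p = T n"
      using assms by blast
    with fun_cong[OF eq, of n] show "f p = g p"
      by (simp add: dual_morphism_def)
  qed
qed

lemma dual_morphism_surj_if_left_inverse:
  assumes "lin_map sM sN T" "\<forall>m. T (DM m) = DN (T m)"
    and "lin_map sN sM \<rho>" "\<forall>x. \<rho> (DN x) = DM (\<rho> x)" "\<forall>m. \<rho> (T m) = m"
  shows "dual_morphism T ` conformal_dual sN DN = conformal_dual sM DM"
proof
  show "dual_morphism T ` conformal_dual sN DN \<subseteq> conformal_dual sM DM"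
    using dual_morphism_in_conformal_dual[OF assms(1,2)] by blast
  show "conformal_dual sM DM \<subseteq> dual_morphism T ` conformal_dual sN DN"
  proof
    fix f
    assume "f \<in> conformal_dual sM DM"
    then have "dual_morphism \<rho> f \<in> conformal_dual sN DN"
      using assms(3,4) by (rule dual_morphism_in_conformal_dual[rotated 2])
    moreover have "f = dual_morphism T (dual_morphism \<rho> f)"
      using assms(5) by (simp add: dual_morphism_dual_morphism fun_eq_iff)
    ultimately show "f \<in> dual_morphism T ` conformal_dual sN DN"
      by blast
  qed
qed

lemma dual_morphism_factor_through_surj:
  assumes T: "lin_map sN sP T" "\<forall>x. T (DN x) = DP (T x)" "surj T"
    and g: "g \<in> conformal_dual sN DN" "\<forall>n. T n = 0 \<longrightarrow> g n = 0"
  shows "g \<in> dual_morphism T ` conformal_dual sP DP"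
proof -
  interpret g: additive g
    using g(1) by (rule conformal_dual_additive)
  interpret T: additive T
    using T(1) by (rule lin_map_additive)
  define f where "f p = - g (inv T p)" for p
  have f_T: "f (T n) = - g n" for n
  proof -
    have "T (inv T (T n) - n) = 0"
      using T(3) by (simp add: T.diff surj_f_inv_f)
    then have "g (inv T (T n) - n) = 0"
      using g(2) by blast
    then show ?thesis
      unfolding f_def by (simp add: g.diff)
  qed
  have T_scale: "sP c (T n) = T (sN c n)" and T_D: "DP (T n) = T (DN n)" for c n
    using T(1,2) by (simp_all add: lin_map_def)
  have g_scale: "g (sN c n) = smult c (g n)" and g_D: "g (DN n) = [:0, 1:] * g n" for c n
    using g(1) by (simp_all add: conformal_dual_def lin_map_def)
  have "f \<in> conformal_dual sP DP"
    unfolding conformal_dual_def lin_map_def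
  proof (intro CollectI conjI allI)
    fix x y c
    obtain n m where "x = T n" "y = T m"
      using T(3) by blast
    then show "f (x + y) = f x + f y" "f (sP c x) = smult c (f x)" "f (DP x) = [:0, 1:] * f x"
      by (simp_all add: f_T T_scale T_D g_scale g_D g.add flip: T.add)
  qed
  moreover have "g = dual_morphism T f"
    by (simp add: dual_morphism_def f_T)
  ultimately show ?thesis
    by blast
qed

lemma dual_exact_middle:
  assumes "lin_map sN sP d2" "\<forall>x. d2 (DN x) = DP (d2 x)" "surj d2" "range d1 = {n. d2 n = 0}"
  shows "{g \<in> conformal_dual sN DN. dual_morphism d1 g = (\<lambda>_. 0)}
       = dual_morphism d2 ` conformal_dual sP DP"
proof
  show "{g \<in> conformal_dual sN DN. dual_morphism d1 g = (\<lambda>_. 0)} \<subseteq> dual_morphism d2 ` conformal_dual sP DP"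
  proof clarify
    fix g
    assume g: "g \<in> conformal_dual sN DN" "dual_morphism d1 g = (\<lambda>_. 0)"
    have "g n = 0" if "d2 n = 0" for n
    proof -
      have "n \<in> range d1"
        using that assms(4) by simp
      then obtain m where "n = d1 m"
        by blast
      with fun_cong[OF g(2), of m] show ?thesis
        by (simp add: dual_morphism_def)
    qed
    then show "g \<in> dual_morphism d2 ` conformal_dual sP DP"
      using dual_morphism_factor_through_surj[OF assms(1-3) g(1)] by blast
  qed
  show "dual_morphism d2 ` conformal_dual sP DP \<subseteq> {g \<in> conformal_dual sN DN. dual_morphism d1 g = (\<lambda>_. 0)}"
  proof clarify
    fix f
    assume f: "f \<in> conformal_dual sP DP"
    have "d2 (d1 m) = 0" for m
      using rangeI[of d1 m] unfolding assms(4) by simp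
    then have "f (d2 (d1 m)) = 0" for m
      using additive.zero[OF conformal_dual_additive[OF f]] by simp
    then show "dual_morphism d2 f \<in> conformal_dual sN DN \<and> dual_morphism d1 (dual_morphism d2 f) = (\<lambda>_. 0)"
      using dual_morphism_in_conformal_dual[OF assms(1,2) f] by (simp add: dual_morphism_dual_morphism fun_eq_iff)
  qed
qed

theorem proposition2p19:
  fixes sR :: "complex \<Rightarrow> 'r::ab_group_add \<Rightarrow> 'r" and DR :: "'r \<Rightarrow> 'r"
    and GR :: "bool \<Rightarrow> 'r set" and pr :: "nat \<Rightarrow> 'r \<Rightarrow> 'r \<Rightarrow> 'r"
    and sM :: "complex \<Rightarrow> 'm::ab_group_add \<Rightarrow> 'm" and DM :: "'m \<Rightarrow> 'm"
    and GM :: "bool \<Rightarrow> 'm set" and actM :: "nat \<Rightarrow> 'r \<Rightarrow> 'm \<Rightarrow> 'm"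
    and sN :: "complex \<Rightarrow> 'n::ab_group_add \<Rightarrow> 'n" and DN :: "'n \<Rightarrow> 'n"
    and GN :: "bool \<Rightarrow> 'n set" and actN :: "nat \<Rightarrow> 'r \<Rightarrow> 'n \<Rightarrow> 'n"
    and sP :: "complex \<Rightarrow> 'p::ab_group_add \<Rightarrow> 'p" and DP :: "'p \<Rightarrow> 'p"
    and GP :: "bool \<Rightarrow> 'p set" and actP :: "nat \<Rightarrow> 'r \<Rightarrow> 'p \<Rightarrow> 'p"
    and d1 :: "'m \<Rightarrow> 'n" and d2 :: "'n \<Rightarrow> 'p"
  assumes R: "conformal_superalgebra sR DR GR pr"
    and M: "conformal_module sR DR GR pr sM DM GM actM"
    and N: "conformal_module sR DR GR pr sN DN GN actN"
    and P: "conformal_module sR DR GR pr sP DP GP actP"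
    and d1: "module_morphism sM DM actM sN DN actN d1"
    and d2: "module_morphism sN DN actN sP DP actP d2"
    and exact_M: "inj d1"
    and exact_N: "range d1 = {n. d2 n = 0}"
    and exact_P: "surj d2"
    and coker0: "quot_fin_gen sM DM {0} \<and> quot_torsion_free sM DM {0}"
    and coker1: "quot_fin_gen sN DN (range d1) \<and> quot_torsion_free sN DN (range d1)"
    and coker2: "quot_fin_gen sP DP (range d2) \<and> quot_torsion_free sP DP (range d2)"
  shows "inj_on (dual_morphism d2) (conformal_dual sP DP)
    \<and> dual_morphism d2 ` conformal_dual sP DP \<subseteq> conformal_dual sN DN
    \<and> {g \<in> conformal_dual sN DN. dual_morphism d1 g = (\<lambda>_. 0)} = dual_morphism d2 ` conformal_dual sP DP
    \<and> dual_morphism d1 ` conformal_dual sN DN = conformal_dual sM DM"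
proof -
  have d1_linear: "lin_map sM sN d1" and d1_D: "\<forall>m. d1 (DM m) = DN (d1 m)"
    using d1 unfolding module_morphism_def by blast+
  have d2_linear: "lin_map sN sP d2" and d2_D: "\<forall>n. d2 (DN n) = DP (d2 n)"
    using d2 unfolding module_morphism_def by blast+
  have "cpd_module sN DN"
    using N unfolding conformal_module_def by blast
  then obtain \<rho> where \<rho>: "lin_map sN sM \<rho>" "\<forall>x. \<rho> (DN x) = DM (\<rho> x)" "\<forall>m. \<rho> (d1 m) = m"
    using ex_left_inverse_morphism[OF _ d1_linear d1_D exact_M] coker1 by blast
  have "inj_on (dual_morphism d2) (conformal_dual sP DP)"
    using inj_dual_morphism[OF exact_P] by (rule inj_on_subset) simp
  moreover have "dual_morphism d2 ` conformal_dual sP DP \<subseteq> conformal_dual sN DN"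
    using dual_morphism_in_conformal_dual[OF d2_linear d2_D] by blast
  ultimately show ?thesis
    using dual_exact_middle[OF d2_linear d2_D exact_P exact_N]
      dual_morphism_surj_if_left_inverse[OF d1_linear d1_D \<rho>]
    by blast
qed

end
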